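(* Let $\Omega\subset\mathbb{R}^n$ be open with $0\in\Omega$, let $\alpha\in\mathbb{R}$ and $1\le p,q\le\infty$. Then $\dot K_p^{\alpha,q}(\Omega)\hookrightarrow L^1_{\mathrm{loc}}(\Omega)$ holds if and only if $(\alpha,p,q)\in V_{\alpha,p,q}$.
   Context: For $k\in\mathbb{Z}$ let $C_k=\{x\in\mathbb{R}^n: 2^{k-1}\le |x|<2^k\}$ and $\chi_k$ its characteristic function. For $\alpha\in\mathbb{R}$ and $1\le p,q\le\infty$, the homogeneous Herz space $\dot K_p^{\alpha,q}(\mathbb{R}^n)$ is the set of $f\in L^p_{\mathrm{loc}}(\mathbb{R}^n\setminus\{0\})$ with $\|f\|_{\dot K_p^{\alpha,q}(\mathbb{R}^n)}=\big(\sum_{k\in\mathbb{Z}}2^{k\alpha q}\|f\chi_k\|_{L^p}^q\big)^{1/q}<\infty$ (usual modification when $q=\infty$). For $\Omega$ open, $\dot K_p^{\alpha,q}(\Omega)$ consists of functions $f$ on $\Omega$ with $\|f\|_{\dot K_p^{\alpha,q}(\Omega)}:=\|f\chi_\Omega\|_{\dot K_p^{\alpha,q}(\mathbb{R}^n)}<\infty$ ($f$ extended by zero). $V_{\alpha,p,q}$ denotes the set of triples $(\alpha,p,q)\in\mathbb{R}\times[1,\infty]^2$ such that either (i) $\alpha<n-\frac np$, $1\le p\le\infty$, $1\le q\le\infty$; or (ii) $\alpha=n-\frac np$, $1\le p\le\infty$, $q=1$; or (iii) $\alpha=0$, $p=\infty$, $q=\infty$. *)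

theory Defs
  imports "HOL-Analysis.Analysis" "HOL-Probability.Essential_Supremum"
begin

definition enn_powr :: "ennreal \<Rightarrow> real \<Rightarrow> ennreal" where
  "enn_powr x r = (if x = top then top else ennreal (enn2real x powr r))"

definition Lp_norm :: "ennreal \<Rightarrow> ('a::euclidean_space \<Rightarrow> real) \<Rightarrow> ennreal" where
  "Lp_norm p f = (if p = top then esssup lebesgue (\<lambda>x. ennreal \<bar>f x\<bar>)
     else enn_powr (\<integral>\<^sup>+ x. ennreal (\<bar>f x\<bar> powr enn2real p) \<partial>lebesgue) (1 / enn2real p))"

definition annulus :: "int \<Rightarrow> 'a::euclidean_space set" where
  "annulus k = {x. 2 powr (real_of_int k - 1) \<le> norm x \<and> norm x < 2 powr (real_of_int k)}"

definition Lp_loc_punct :: "ennreal \<Rightarrow> ('a::euclidean_space \<Rightarrow> real) \<Rightarrow> bool" where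
  "Lp_loc_punct p f \<longleftrightarrow> f \<in> borel_measurable lebesgue \<and>
     (\<forall>K. compact K \<and> K \<subseteq> - {0} \<longrightarrow> Lp_norm p (\<lambda>x. f x * indicator K x) < top)"

definition herz_norm :: "real \<Rightarrow> ennreal \<Rightarrow> ennreal \<Rightarrow> ('a::euclidean_space \<Rightarrow> real) \<Rightarrow> ennreal" where
  "herz_norm \<alpha> p q f = (if q = top then
       (SUP k::int. ennreal (2 powr (real_of_int k * \<alpha>)) * Lp_norm p (\<lambda>x. f x * indicator (annulus k) x))
     else enn_powr (\<integral>\<^sup>+ k. ennreal (2 powr (real_of_int k * \<alpha> * enn2real q)) *
              enn_powr (Lp_norm p (\<lambda>x. f x * indicator (annulus k) x)) (enn2real q)
            \<partial>(count_space (UNIV::int set))) (1 / enn2real q))"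

definition herz_space :: "'a::euclidean_space set \<Rightarrow> real \<Rightarrow> ennreal \<Rightarrow> ennreal \<Rightarrow> ('a \<Rightarrow> real) set" where
  "herz_space \<Omega> \<alpha> p q = {f. Lp_loc_punct p (\<lambda>x. indicator \<Omega> x * f x) \<and>
                               herz_norm \<alpha> p q (\<lambda>x. indicator \<Omega> x * f x) < top}"

definition L1_loc :: "'a::euclidean_space set \<Rightarrow> ('a \<Rightarrow> real) set" where
  "L1_loc \<Omega> = {f. \<forall>K. compact K \<and> K \<subseteq> \<Omega> \<longrightarrow> set_integrable lebesgue K f}"

text \<open>The set V of admissible triples, n the dimension; n/p read as 0 for p = infinity.\<close>
definition inv_exp :: "ennreal \<Rightarrow> real" where
  "inv_exp p = (if p = top then 0 else 1 / enn2real p)"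

definition V_set :: "nat \<Rightarrow> (real \<times> ennreal \<times> ennreal) set" where
  "V_set n = {(\<alpha>, p, q). 1 \<le> p \<and> 1 \<le> q \<and>
     (\<alpha> < real n - real n * inv_exp p
      \<or> (\<alpha> = real n - real n * inv_exp p \<and> q = 1)
      \<or> (\<alpha> = 0 \<and> p = top \<and> q = top))}"

end

theory Submission
  imports Defs
begin

text \<open>
  Put \<delta> = \<alpha> - n (1 - 1/p). On the annulus C_k, of measure proportional to 2^(kn), Hoelder's
  inequality gives  int_{C_k} |f| <= c 2^(-k \<delta>) 2^(k \<alpha>) ||f \<chi>_k||_p,  so the integral of |f|
  over a ball B(0, 2^N) is at most c sum_{k <= N} 2^(-k \<delta>) times the k-th Herz term. For \<delta> < 0
  this is a geometric series against a bounded sequence; for \<delta> = 0 and q = 1 it is bounded by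
  the Herz norm itself. The triple (0, \<infinity>, \<infinity>) has \<delta> = -n and falls under the first case.

  Conversely, if \<delta> > 0, or \<delta> = 0 and q > 1, the function equal to 2^(-kn)/|k| on C_k for
  k <= k_0 < 0 has Herz terms proportional to 2^(k \<delta>)/|k|, which are bounded and q-summable,
  while its integral over C_k is proportional to 1/|k|, so it is not integrable near 0.
\<close>

section \<open>Dyadic annuli\<close>

definition annulus_index :: "'a::euclidean_space \<Rightarrow> int" where
  "annulus_index x = \<lfloor>log 2 (norm x)\<rfloor> + 1"

lemma mem_annulus_iff: "x \<in> annulus k \<longleftrightarrow> x \<noteq> 0 \<and> annulus_index x = k"
proof (cases "x = 0")
  case False
  then have "x \<in> annulus k \<longleftrightarrow> real_of_int k - 1 \<le> log 2 (norm x) \<and> log 2 (norm x) < real_of_int k"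
    unfolding annulus_def by (simp add: le_log_iff log_less_iff)
  also have "\<dots> \<longleftrightarrow> annulus_index x = k"
    unfolding annulus_index_def by linarith
  finally show ?thesis using False by simp
qed (simp add: annulus_def)

lemma annulus_index_le_iff:
  assumes "x \<noteq> 0"
  shows "annulus_index x \<le> k \<longleftrightarrow> norm x < 2 powr real_of_int k"
proof -
  have "annulus_index x \<le> k \<longleftrightarrow> log 2 (norm x) < real_of_int k"
    unfolding annulus_index_def by linarith
  also have "\<dots> \<longleftrightarrow> norm x < 2 powr real_of_int k"
    using assms by (simp add: log_less_iff)
  finally show ?thesis .
qed

lemma annulus_eq_ball_diff:
  "annulus k = ball 0 (2 powr real_of_int k) - ball 0 (2 powr (real_of_int k - 1))"
  by (auto simp: annulus_def)

lemma sets_annulus [measurable]: "annulus k \<in> sets lebesgue"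
  by (auto simp: annulus_eq_ball_diff)

lemma measurable_annulus_index [measurable]:
  "(annulus_index :: 'a::euclidean_space \<Rightarrow> int) \<in> lebesgue \<rightarrow>\<^sub>M count_space UNIV"
proof (subst measurable_count_space_eq2_countable, intro conjI ballI)
  fix k :: int
  have "annulus_index -` {k} \<inter> space lebesgue = annulus k \<union> (annulus_index -` {k} \<inter> {0::'a})"
    by (auto simp: mem_annulus_iff)
  moreover have "annulus_index -` {k} \<inter> {0::'a} \<in> sets lebesgue"
    by (cases "annulus_index (0::'a) = k") auto
  ultimately show "annulus_index -` {k} \<inter> space lebesgue \<in> sets (lebesgue :: 'a measure)"
    by (metis sets.Un sets_annulus)
qed auto

definition unit_annulus_volume :: "'a::euclidean_space itself \<Rightarrow> real" where
  "unit_annulus_volume _ = unit_ball_vol DIM('a) * (1 - 2 powr (- real DIM('a)))"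

lemma unit_annulus_volume_pos: "unit_annulus_volume TYPE('a::euclidean_space) > 0"
proof -
  have "2 powr (- real DIM('a)) < 1" by (simp add: powr_less_one)
  then show ?thesis unfolding unit_annulus_volume_def by simp
qed

lemma emeasure_annulus:
  "emeasure lebesgue (annulus k :: 'a::euclidean_space set) =
     ennreal (2 powr (real_of_int k * DIM('a)) * unit_annulus_volume TYPE('a))"
proof -
  let ?n = "DIM('a)"
  have ball: "emeasure lborel (ball (0::'a) r) = ennreal (unit_ball_vol ?n * r ^ ?n)" if "r \<ge> 0" for r
    using emeasure_ball[OF that, of "0::'a"] by simp
  have "emeasure lebesgue (annulus k :: 'a set) =
      emeasure lebesgue (ball (0::'a) (2 powr real_of_int k)) -
      emeasure lebesgue (ball (0::'a) (2 powr (real_of_int k - 1)))"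
    unfolding annulus_eq_ball_diff
    using emeasure_lborel_ball_finite[of "0::'a"]
    by (intro emeasure_Diff) (auto simp: top.not_eq_extremum intro!: subset_ball)
  also have "\<dots> = ennreal (unit_ball_vol ?n * (2 powr real_of_int k) ^ ?n -
                           unit_ball_vol ?n * (2 powr (real_of_int k - 1)) ^ ?n)"
    by (simp add: ball ennreal_minus[symmetric])
  also have "(2 powr real_of_int k) ^ ?n = 2 powr (real_of_int k * ?n)"
    by (simp add: powr_realpow[symmetric] powr_powr)
  also have "(2 powr (real_of_int k - 1)) ^ ?n = 2 powr (real_of_int k * ?n) * 2 powr (- real ?n)"
    by (simp add: powr_realpow[symmetric] powr_powr powr_add[symmetric] algebra_simps)
  finally show ?thesis by (simp add: unit_annulus_volume_def algebra_simps)
qed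

lemma suminf_annuli_below:
  fixes x :: "'a::euclidean_space"
  shows "(\<Sum>j. ennreal (\<bar>g x\<bar> * indicator (annulus (k0 - int j)) x)) =
           (if x \<noteq> 0 \<and> annulus_index x \<le> k0 then ennreal \<bar>g x\<bar> else 0)"
proof (cases "x \<noteq> 0 \<and> annulus_index x \<le> k0")
  case True
  define j0 where "j0 = nat (k0 - annulus_index x)"
  have "x \<in> annulus (k0 - int j) \<longleftrightarrow> j = j0" for j
    using True by (auto simp: mem_annulus_iff j0_def)
  then have "(\<Sum>j. ennreal (\<bar>g x\<bar> * indicator (annulus (k0 - int j)) x)) =
             (\<Sum>j\<in>{j0}. ennreal (\<bar>g x\<bar> * indicator (annulus (k0 - int j)) x))"
    by (intro suminf_finite) (auto simp: indicator_def)
  then show ?thesis using True by (simp add: j0_def mem_annulus_iff)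
next
  case False
  then have "x \<notin> annulus (k0 - int j)" for j by (auto simp: mem_annulus_iff)
  then show ?thesis using False by auto
qed

section \<open>L^p norms and Hoelder's inequality\<close>

lemma enn_powr_ennreal: "x \<ge> 0 \<Longrightarrow> enn_powr (ennreal x) r = ennreal (x powr r)"
  by (simp add: enn_powr_def)

lemma enn_powr_top [simp]: "enn_powr top r = top"
  by (simp add: enn_powr_def)

lemma enn_powr_less_top_iff: "enn_powr x r < top \<longleftrightarrow> x < top"
  by (auto simp: enn_powr_def top.not_eq_extremum)

lemma enn_powr_1: "enn_powr x 1 = x"
  by (cases x) (auto simp: enn_powr_def)

lemma enn_powr_mono:
  assumes "x \<le> y" "r \<ge> 0"
  shows "enn_powr x r \<le> enn_powr y r"
proof (cases "y = top")
  case False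
  then have "x \<noteq> top" using assms top.extremum_uniqueI by auto
  then show ?thesis using False assms
    by (auto simp: enn_powr_def top.not_eq_extremum intro!: ennreal_leI powr_mono2 enn2real_mono)
qed simp

lemma enn_powr_mult_ennreal:
  assumes "a > 0" "r > 0"
  shows "enn_powr (ennreal a * x) r = ennreal (a powr r) * enn_powr x r"
  using assms by (cases x) (auto simp: enn_powr_ennreal ennreal_mult'[symmetric] powr_mult ennreal_mult_top)

lemma enn_powr_enn_powr_inverse:
  assumes "r > 0"
  shows "enn_powr (enn_powr x r) (1 / r) = x"
  using assms by (cases x) (auto simp: enn_powr_ennreal powr_powr)

lemma finite_exponent:
  assumes "1 \<le> p" "p \<noteq> top"
  shows "1 \<le> enn2real p" "inv_exp p = 1 / enn2real p"
  using assms by (cases p; simp add: inv_exp_def)+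

lemma Lp_norm_cmult_indicator:
  fixes A :: "'a::euclidean_space set"
  assumes A: "A \<in> sets lebesgue" "emeasure lebesgue A = ennreal m" "m > 0" and p: "1 \<le> p"
  shows "Lp_norm p (\<lambda>x. c * indicator A x) = ennreal (\<bar>c\<bar> * m powr inv_exp p)"
proof (cases "p = top")
  case True
  have meas: "(\<lambda>x. ennreal \<bar>c * indicator A x\<bar>) \<in> borel_measurable lebesgue"
    using A by measurable
  have "esssup lebesgue (\<lambda>x. ennreal \<bar>c * indicator A x\<bar>) \<le> ennreal \<bar>c\<bar>"
    by (rule esssup_I[OF meas]) (auto simp: indicator_def)
  moreover have "\<not> esssup lebesgue (\<lambda>x. ennreal \<bar>c * indicator A x\<bar>) < ennreal \<bar>c\<bar>"
  proof
    assume less: "esssup lebesgue (\<lambda>x. ennreal \<bar>c * indicator A x\<bar>) < ennreal \<bar>c\<bar>"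
    have "AE x in lebesgue. x \<notin> A"
      using esssup_AE[of "\<lambda>x. ennreal \<bar>c * indicator A x\<bar>" lebesgue]
      by eventually_elim (use less in \<open>auto simp: indicator_def\<close>)
    then have "emeasure lebesgue A = 0"
      using AE_iff_measurable[OF A(1), of "\<lambda>x. x \<notin> A"] by simp
    then show False using A by simp
  qed
  ultimately show ?thesis using True A(3) by (simp add: Lp_norm_def inv_exp_def)
next
  case False
  define r where "r = enn2real p"
  have r: "1 \<le> r" "inv_exp p = 1 / r" using finite_exponent[OF p False] by (auto simp: r_def)
  have "(\<integral>\<^sup>+ x. ennreal (\<bar>c * indicator A x\<bar> powr r) \<partial>lebesgue)
      = (\<integral>\<^sup>+ x. ennreal (\<bar>c\<bar> powr r) * indicator A x \<partial>lebesgue)"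
    using r by (intro nn_integral_cong) (auto simp: indicator_def)
  also have "\<dots> = ennreal (\<bar>c\<bar> powr r * m)"
    using A by (simp add: nn_integral_cmult_indicator ennreal_mult)
  finally show ?thesis
    using False r A by (simp add: Lp_norm_def r_def[symmetric] enn_powr_ennreal powr_mult powr_powr)
qed

lemma Lp_norm_less_top_if_bounded:
  fixes g :: "'a::euclidean_space \<Rightarrow> real"
  assumes g: "g \<in> borel_measurable lebesgue"
    and A: "A \<in> sets lebesgue" "emeasure lebesgue A < top"
    and bound: "\<And>x. \<bar>g x\<bar> \<le> M * indicator A x" and M: "M \<ge> 0" and p: "1 \<le> p"
  shows "Lp_norm p g < top"
proof (cases "p = top")
  case True
  have "esssup lebesgue (\<lambda>x. ennreal \<bar>g x\<bar>) \<le> ennreal M"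
  proof (rule esssup_I)
    show "(\<lambda>x. ennreal \<bar>g x\<bar>) \<in> borel_measurable lebesgue" using g by measurable
    show "AE x in lebesgue. ennreal \<bar>g x\<bar> \<le> ennreal M"
    proof (intro AE_I2 ennreal_leI)
      fix x show "\<bar>g x\<bar> \<le> M" using bound[of x] M by (cases "x \<in> A") auto
    qed
  qed
  then show ?thesis using True by (simp add: Lp_norm_def le_less_trans)
next
  case False
  define r where "r = enn2real p"
  have r: "1 \<le> r" using finite_exponent[OF p False] by (auto simp: r_def)
  have "(\<integral>\<^sup>+ x. ennreal (\<bar>g x\<bar> powr r) \<partial>lebesgue) \<le> (\<integral>\<^sup>+ x. ennreal (M powr r) * indicator A x \<partial>lebesgue)"
  proof (intro nn_integral_mono)
    fix x show "ennreal (\<bar>g x\<bar> powr r) \<le> ennreal (M powr r) * indicator A x"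
      using bound[of x] r by (cases "x \<in> A") (auto intro!: ennreal_leI powr_mono2)
  qed
  also have "\<dots> < top" using A by (simp add: nn_integral_cmult_indicator ennreal_mult_less_top)
  finally show ?thesis using False by (simp add: Lp_norm_def r_def[symmetric] enn_powr_less_top_iff)
qed

text \<open>
  The weights are chosen so that, for t = |h x| with \<integral> |h|^r = i and h supported on a set of
  measure m, the right-hand side integrates to 1/r + (1 - 1/r) = 1. This is how Hoelder's
  inequality is obtained in nn_integral_abs_le_Holder_finite.
\<close>
lemma Youngs_inequality_scaled:
  fixes r i m t :: real
  assumes r: "r > 1" and pos: "i > 0" "m > 0" "t \<ge> 0"
  shows "t * (i powr (-1/r) * m powr (1/r - 1)) \<le> t powr r / (r * i) + (1 - 1/r) / m"
proof -
  define s where "s = r / (r - 1)"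
  have s: "s > 1" "1/r + 1/s = 1" "1/s = 1 - 1/r" using r by (auto simp: s_def field_simps)
  have "(t * i powr (-1/r)) * m powr (1/r - 1)
        \<le> (t * i powr (-1/r)) powr r / r + (m powr (1/r - 1)) powr s / s"
    using pos by (intro Youngs_inequality[OF r s(1,2)]) auto
  also have "(t * i powr (-1/r)) powr r = t powr r / i"
    using r pos by (simp add: powr_minus_divide powr_divide powr_powr)
  also have "(1/r - 1) * s = -1"
    using r by (simp add: s_def field_simps)
  then have "(m powr (1/r - 1)) powr s = 1 / m"
    using pos by (simp add: powr_powr powr_minus_divide)
  also have "1 / m / s = (1 - 1/r) / m"
    using r by (simp add: s_def field_simps)
  finally show ?thesis by (simp add: field_simps)
qed

lemma nn_integral_abs_le_Holder_finite:
  fixes h :: "'b \<Rightarrow> real"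
  assumes [measurable]: "h \<in> borel_measurable M"
    and A: "A \<in> sets M" "emeasure M A = ennreal m" "m > 0" and supp: "\<And>x. x \<notin> A \<Longrightarrow> h x = 0"
    and r: "r > 1" and i: "(\<integral>\<^sup>+x. ennreal (\<bar>h x\<bar> powr r) \<partial>M) = ennreal i" "i > 0"
  shows "(\<integral>\<^sup>+x. ennreal \<bar>h x\<bar> \<partial>M) \<le> ennreal (i powr (1/r) * m powr (1 - 1/r))"
proof -
  define K where "K = i powr (-1/r) * m powr (1/r - 1)"
  have K: "K > 0" using i A by (simp add: K_def)
  have "ennreal K * (\<integral>\<^sup>+x. ennreal \<bar>h x\<bar> \<partial>M) = (\<integral>\<^sup>+x. ennreal (\<bar>h x\<bar> * K) \<partial>M)"
    using K by (subst nn_integral_cmult[symmetric]) (auto simp: ennreal_mult' mult.commute)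
  also have "\<dots> \<le> (\<integral>\<^sup>+x. ennreal (1 / (r * i)) * ennreal (\<bar>h x\<bar> powr r) +
                          ennreal ((1 - 1/r) / m) * indicator A x \<partial>M)"
  proof (intro nn_integral_mono)
    fix x
    show "ennreal (\<bar>h x\<bar> * K) \<le> ennreal (1 / (r * i)) * ennreal (\<bar>h x\<bar> powr r) +
                                  ennreal ((1 - 1/r) / m) * indicator A x"
    proof (cases "x \<in> A")
      case True
      have "ennreal (\<bar>h x\<bar> * K) \<le> ennreal (1 / (r * i) * \<bar>h x\<bar> powr r + (1 - 1/r) / m)"
        using Youngs_inequality_scaled[OF r i(2) A(3), of "\<bar>h x\<bar>"] by (intro ennreal_leI) (simp add: K_def)
      also have "\<dots> = ennreal (1 / (r * i)) * ennreal (\<bar>h x\<bar> powr r) + ennreal ((1 - 1/r) / m)"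
        using r i A by (simp add: ennreal_mult'[symmetric] ennreal_plus[symmetric] del: ennreal_plus)
      finally show ?thesis using True by simp
    qed (simp add: supp)
  qed
  also have "\<dots> = ennreal (1 / (r * i)) * ennreal i + ennreal ((1 - 1/r) / m) * ennreal m"
    using A by (subst nn_integral_add) (auto simp: nn_integral_cmult nn_integral_cmult_indicator i)
  also have "\<dots> = 1"
    using r i A by (simp add: ennreal_mult[symmetric] ennreal_plus[symmetric] del: ennreal_plus)
  finally have le1: "ennreal K * (\<integral>\<^sup>+x. ennreal \<bar>h x\<bar> \<partial>M) \<le> 1" .
  have "(\<integral>\<^sup>+x. ennreal \<bar>h x\<bar> \<partial>M) = ennreal (1 / K) * (ennreal K * (\<integral>\<^sup>+x. ennreal \<bar>h x\<bar> \<partial>M))"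
    using K by (simp add: mult.assoc[symmetric] ennreal_mult'[symmetric])
  also have "\<dots> \<le> ennreal (1 / K)"
    using mult_left_mono[OF le1, of "ennreal (1 / K)"] by simp
  also have "1 / K = i powr (1/r) * m powr (1 - 1/r)"
  proof -
    have "K * (i powr (1/r) * m powr (1 - 1/r)) =
          (i powr (-1/r) * i powr (1/r)) * (m powr (1/r - 1) * m powr (1 - 1/r))"
      by (simp add: K_def mult_ac)
    also have "\<dots> = 1" using i A by (simp add: powr_add[symmetric])
    finally show ?thesis using K by (simp add: field_simps)
  qed
  finally show ?thesis .
qed

lemma nn_integral_abs_le_Holder:
  fixes h :: "'b \<Rightarrow> real"
  assumes [measurable]: "h \<in> borel_measurable M"
    and A: "A \<in> sets M" "emeasure M A = ennreal m" "m > 0" and supp: "\<And>x. x \<notin> A \<Longrightarrow> h x = 0"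
    and r: "r \<ge> 1"
  shows "(\<integral>\<^sup>+x. ennreal \<bar>h x\<bar> \<partial>M) \<le>
           enn_powr (\<integral>\<^sup>+x. ennreal (\<bar>h x\<bar> powr r) \<partial>M) (1/r) * ennreal (m powr (1 - 1/r))"
proof -
  define I where "I = (\<integral>\<^sup>+x. ennreal (\<bar>h x\<bar> powr r) \<partial>M)"
  consider "r = 1" | "I = top" | "I = 0" | i where "r > 1" "I = ennreal i" "i > 0"
    using r by (cases I) (fastforce simp: ennreal_0[symmetric] simp del: ennreal_0)+
  then show ?thesis
  proof cases
    case 1
    then show ?thesis using A by (simp add: enn_powr_1)
  next
    case 2
    then show ?thesis using A by (simp add: I_def[symmetric] ennreal_top_mult)
  next
    case 3
    then have "AE x in M. ennreal (\<bar>h x\<bar> powr r) = 0"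
      unfolding I_def by (subst (asm) nn_integral_0_iff_AE) auto
    then have "AE x in M. ennreal \<bar>h x\<bar> = 0"
      by eventually_elim simp
    then have "(\<integral>\<^sup>+x. ennreal \<bar>h x\<bar> \<partial>M) = 0"
      by (subst nn_integral_0_iff_AE) auto
    then show ?thesis by simp
  next
    case 4
    then have "(\<integral>\<^sup>+x. ennreal \<bar>h x\<bar> \<partial>M) \<le> ennreal (i powr (1/r) * m powr (1 - 1/r))"
      by (intro nn_integral_abs_le_Holder_finite[OF _ A supp]) (auto simp: I_def)
    then show ?thesis using 4 A by (simp add: I_def[symmetric] enn_powr_ennreal ennreal_mult')
  qed
qed

lemma nn_integral_abs_le_esssup:
  fixes h :: "'b \<Rightarrow> real"
  assumes A: "A \<in> sets M" and supp: "\<And>x. x \<notin> A \<Longrightarrow> h x = 0"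
  shows "(\<integral>\<^sup>+x. ennreal \<bar>h x\<bar> \<partial>M) \<le> esssup M (\<lambda>x. ennreal \<bar>h x\<bar>) * emeasure M A"
proof -
  have "(\<integral>\<^sup>+x. ennreal \<bar>h x\<bar> \<partial>M) \<le> (\<integral>\<^sup>+x. esssup M (\<lambda>x. ennreal \<bar>h x\<bar>) * indicator A x \<partial>M)"
  proof (rule nn_integral_mono_AE)
    show "AE x in M. ennreal \<bar>h x\<bar> \<le> esssup M (\<lambda>x. ennreal \<bar>h x\<bar>) * indicator A x"
      using esssup_AE[of "\<lambda>x. ennreal \<bar>h x\<bar>" M]
      by eventually_elim (auto simp: supp indicator_def)
  qed
  also have "\<dots> = esssup M (\<lambda>x. ennreal \<bar>h x\<bar>) * emeasure M A"
    using A by (simp add: nn_integral_cmult_indicator)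
  finally show ?thesis .
qed

lemma nn_integral_indicator_le_Lp_norm:
  fixes g :: "'a::euclidean_space \<Rightarrow> real"
  assumes g: "g \<in> borel_measurable lebesgue"
    and A: "A \<in> sets lebesgue" "emeasure lebesgue A = ennreal m" "m > 0" and p: "1 \<le> p"
  shows "(\<integral>\<^sup>+x. ennreal \<bar>g x * indicator A x\<bar> \<partial>lebesgue)
          \<le> Lp_norm p (\<lambda>x. g x * indicator A x) * ennreal (m powr (1 - inv_exp p))"
proof (cases "p = top")
  case True
  then show ?thesis
    using nn_integral_abs_le_esssup[OF A(1), of "\<lambda>x. g x * indicator A x"] A
    by (simp add: Lp_norm_def inv_exp_def)
next
  case False
  have "(\<lambda>x. g x * indicator A x) \<in> borel_measurable lebesgue" using g A(1) by measurable
  then show ?thesis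
    using nn_integral_abs_le_Holder[OF _ A, of "\<lambda>x. g x * indicator A x" "enn2real p"]
      False finite_exponent[OF p False]
    by (simp add: Lp_norm_def)
qed

section \<open>Herz norms\<close>

definition herz_term :: "real \<Rightarrow> ennreal \<Rightarrow> ('a::euclidean_space \<Rightarrow> real) \<Rightarrow> int \<Rightarrow> ennreal" where
  "herz_term \<alpha> p f k = ennreal (2 powr (real_of_int k * \<alpha>)) * Lp_norm p (\<lambda>x. f x * indicator (annulus k) x)"

lemma herz_norm_top: "herz_norm \<alpha> p top f = (SUP k. herz_term \<alpha> p f k)"
  by (simp add: herz_norm_def herz_term_def)

lemma herz_norm_1: "herz_norm \<alpha> p 1 f = (\<integral>\<^sup>+k. herz_term \<alpha> p f k \<partial>count_space UNIV)"
  by (simp add: herz_norm_def herz_term_def enn_powr_1)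

lemma herz_norm_finite_exponent:
  assumes "1 \<le> q" "q \<noteq> top"
  shows "herz_norm \<alpha> p q f =
    enn_powr (\<integral>\<^sup>+k. enn_powr (herz_term \<alpha> p f k) (enn2real q) \<partial>count_space UNIV) (1 / enn2real q)"
proof -
  have r: "enn2real q > 0" using finite_exponent[OF assms] by simp
  have "ennreal (2 powr (real_of_int k * \<alpha> * enn2real q)) * enn_powr L (enn2real q) =
        enn_powr (ennreal (2 powr (real_of_int k * \<alpha>)) * L) (enn2real q)" for k L
    using r by (simp add: enn_powr_mult_ennreal powr_powr)
  then show ?thesis using assms(2) by (simp add: herz_norm_def herz_term_def)
qed

lemma herz_term_le_herz_norm:
  assumes "1 \<le> q"
  shows "herz_term \<alpha> p f k \<le> herz_norm \<alpha> p q f"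
proof (cases "q = top")
  case True
  then show ?thesis by (simp add: herz_norm_top SUP_upper)
next
  case False
  define r where "r = enn2real q"
  have r: "r > 0" using finite_exponent[OF assms False] by (simp add: r_def)
  have "herz_term \<alpha> p f k = enn_powr (enn_powr (herz_term \<alpha> p f k) r) (1 / r)"
    using r by (simp add: enn_powr_enn_powr_inverse)
  also have "\<dots> \<le> enn_powr (\<integral>\<^sup>+k. enn_powr (herz_term \<alpha> p f k) r \<partial>count_space UNIV) (1 / r)"
    using r by (intro enn_powr_mono nn_integral_ge_point) auto
  finally show ?thesis using assms False by (simp add: herz_norm_finite_exponent r_def)
qed

lemma nn_integral_count_space_int_eq_suminf:
  fixes h :: "int \<Rightarrow> ennreal"
  assumes "\<And>k. k > k0 \<Longrightarrow> h k = 0"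
  shows "(\<integral>\<^sup>+k. h k \<partial>count_space UNIV) = (\<Sum>j. h (k0 - int j))"
proof -
  have bij: "bij_betw (\<lambda>j::nat. k0 - int j) UNIV {..k0}"
    by (rule bij_betwI[where g="\<lambda>k. nat (k0 - k)"]) auto
  have "(\<integral>\<^sup>+k. h k \<partial>count_space UNIV) = (\<integral>\<^sup>+k. h k * indicator {..k0} k \<partial>count_space UNIV)"
    using assms by (intro nn_integral_cong) (auto simp: indicator_def not_le)
  also have "\<dots> = (\<integral>\<^sup>+k. h k \<partial>count_space {..k0})"
    by (simp add: nn_integral_count_space_indicator)
  also have "\<dots> = (\<integral>\<^sup>+j. h (k0 - int j) \<partial>count_space UNIV)"
    by (rule nn_integral_bij_count_space[OF bij, symmetric])
  also have "\<dots> = (\<Sum>j. h (k0 - int j))" by (rule nn_integral_count_space_nat)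
  finally show ?thesis .
qed

lemma suminf_le_nn_integral_count_space_int:
  fixes h :: "int \<Rightarrow> ennreal"
  shows "(\<Sum>j. h (k0 - int j)) \<le> (\<integral>\<^sup>+k. h k \<partial>count_space UNIV)"
proof -
  have "(\<Sum>j. h (k0 - int j)) = (\<integral>\<^sup>+k. h k * indicator {..k0} k \<partial>count_space UNIV)"
    by (subst nn_integral_count_space_int_eq_suminf[of k0]) auto
  also have "\<dots> \<le> (\<integral>\<^sup>+k. h k \<partial>count_space UNIV)"
    by (intro nn_integral_mono) (simp add: indicator_def)
  finally show ?thesis .
qed

lemma herz_norm_top_less_top:
  assumes "\<And>k. herz_term \<alpha> p f k \<le> ennreal B"
  shows "herz_norm \<alpha> p top f < top"
proof -
  have "herz_norm \<alpha> p top f \<le> ennreal B"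
    unfolding herz_norm_top using assms by (rule SUP_least)
  then show ?thesis by (rule le_less_trans) simp
qed

lemma herz_norm_less_top_if_summable:
  fixes f :: "'a::euclidean_space \<Rightarrow> real"
  assumes q: "1 \<le> q" "q \<noteq> top"
    and terms: "\<And>k. herz_term \<alpha> p f k = ennreal (b k)" and b: "\<And>k. b k \<ge> 0"
    and vanish: "\<And>k. k > N \<Longrightarrow> b k = 0"
    and summable: "summable (\<lambda>j. b (N - int j) powr enn2real q)"
  shows "herz_norm \<alpha> p q f < top"
proof -
  define r where "r = enn2real q"
  have "(\<integral>\<^sup>+k. enn_powr (herz_term \<alpha> p f k) r \<partial>count_space UNIV) =
        (\<integral>\<^sup>+k. ennreal (b k powr r) \<partial>count_space UNIV)"
    using b by (intro nn_integral_cong) (simp add: terms enn_powr_ennreal)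
  also have "\<dots> = (\<Sum>j. ennreal (b (N - int j) powr r))"
    using vanish by (intro nn_integral_count_space_int_eq_suminf) simp
  finally have "(\<integral>\<^sup>+k. enn_powr (herz_term \<alpha> p f k) r \<partial>count_space UNIV) =
                (\<Sum>j. ennreal (b (N - int j) powr r))" .
  moreover have "(\<Sum>j. ennreal (b (N - int j) powr r)) \<noteq> top"
    using summable unfolding r_def by (rule ennreal_suminf_neq_top) simp
  ultimately have "(\<integral>\<^sup>+k. enn_powr (herz_term \<alpha> p f k) r \<partial>count_space UNIV) < top"
    using top.not_eq_extremum by auto
  then show ?thesis
    unfolding herz_norm_finite_exponent[OF q] r_def[symmetric] enn_powr_less_top_iff .
qed

section \<open>Sufficiency\<close>

definition critical_alpha :: "nat \<Rightarrow> ennreal \<Rightarrow> real" where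
  "critical_alpha n p = real n - real n * inv_exp p"

lemma V_set_iff_critical_alpha:
  assumes "1 \<le> p" "1 \<le> q" "n > 0"
  shows "(\<alpha>, p, q) \<in> V_set n \<longleftrightarrow> \<alpha> < critical_alpha n p \<or> (\<alpha> = critical_alpha n p \<and> q = 1)"
  using assms by (auto simp: V_set_def critical_alpha_def inv_exp_def)

lemma nn_integral_annulus_le_herz_term:
  fixes F :: "'a::euclidean_space \<Rightarrow> real"
  assumes F: "F \<in> borel_measurable lebesgue" and p: "1 \<le> p"
  shows "(\<integral>\<^sup>+x. ennreal \<bar>F x * indicator (annulus k) x\<bar> \<partial>lebesgue) \<le>
    ennreal (unit_annulus_volume TYPE('a) powr (1 - inv_exp p) *
             2 powr (real_of_int k * (critical_alpha DIM('a) p - \<alpha>))) * herz_term \<alpha> p F k"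
proof -
  define c where "c = unit_annulus_volume TYPE('a)"
  define m where "m = 2 powr (real_of_int k * DIM('a)) * c"
  have c: "c > 0" using unit_annulus_volume_pos by (simp add: c_def)
  have "(\<integral>\<^sup>+x. ennreal \<bar>F x * indicator (annulus k) x\<bar> \<partial>lebesgue) \<le>
        Lp_norm p (\<lambda>x. F x * indicator (annulus k) x) * ennreal (m powr (1 - inv_exp p))"
    using c by (intro nn_integral_indicator_le_Lp_norm[OF F sets_annulus _ _ p])
      (simp_all add: emeasure_annulus m_def c_def)
  also have "m powr (1 - inv_exp p) =
      c powr (1 - inv_exp p) * 2 powr (real_of_int k * (critical_alpha DIM('a) p - \<alpha>)) *
      2 powr (real_of_int k * \<alpha>)"
    using c by (simp add: m_def critical_alpha_def powr_mult powr_powr powr_add[symmetric] algebra_simps)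
  finally show ?thesis
    using c by (simp add: herz_term_def c_def ennreal_mult mult_ac)
qed

lemma nn_integral_le_suminf_annuli:
  fixes F :: "'a::euclidean_space \<Rightarrow> real"
  assumes [measurable]: "F \<in> borel_measurable lebesgue"
    and K: "\<And>x. x \<in> K \<Longrightarrow> norm x < 2 powr real_of_int k1"
  shows "(\<integral>\<^sup>+x. ennreal (\<bar>F x\<bar> * indicator K x) \<partial>lebesgue) \<le>
         (\<Sum>j. \<integral>\<^sup>+x. ennreal \<bar>F x * indicator (annulus (k1 - int j)) x\<bar> \<partial>lebesgue)"
proof -
  have "AE x in lebesgue. x \<noteq> (0::'a)"
    by (metis AE_completion AE_lborel_singleton)
  then have "AE x in lebesgue. ennreal (\<bar>F x\<bar> * indicator K x) \<le>
                 (\<Sum>j. ennreal (\<bar>F x\<bar> * indicator (annulus (k1 - int j)) x))"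
  proof eventually_elim
    case (elim x)
    show ?case
    proof (cases "x \<in> K")
      case True
      then have "annulus_index x \<le> k1" using elim K by (simp add: annulus_index_le_iff)
      then show ?thesis using True elim by (simp add: suminf_annuli_below)
    qed simp
  qed
  then have "(\<integral>\<^sup>+x. ennreal (\<bar>F x\<bar> * indicator K x) \<partial>lebesgue) \<le>
             (\<integral>\<^sup>+x. (\<Sum>j. ennreal (\<bar>F x\<bar> * indicator (annulus (k1 - int j)) x)) \<partial>lebesgue)"
    by (rule nn_integral_mono_AE)
  also have "\<dots> = (\<Sum>j. \<integral>\<^sup>+x. ennreal (\<bar>F x\<bar> * indicator (annulus (k1 - int j)) x) \<partial>lebesgue)"
    by (rule nn_integral_suminf) measurable
  finally show ?thesis by (simp add: abs_mult)
qed

lemma suminf_scaled_herz_terms_less_top: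
  assumes H: "herz_norm \<alpha> p q F < top" and q: "1 \<le> q" and \<delta>: "\<delta> > 0 \<or> (\<delta> = 0 \<and> q = 1)"
  shows "(\<Sum>j. ennreal (2 powr (real_of_int (k1 - int j) * \<delta>)) * herz_term \<alpha> p F (k1 - int j)) < top"
proof (cases "\<delta> > 0")
  case True
  obtain h where h: "herz_norm \<alpha> p q F = ennreal h" "h \<ge> 0"
    using H by (cases "herz_norm \<alpha> p q F") auto
  define a where "a = 2 powr (real_of_int k1 * \<delta>) * h"
  have "2 powr (real_of_int (k1 - int j) * \<delta>) = 2 powr (real_of_int k1 * \<delta>) * (2 powr (- \<delta>)) ^ j" for j
    by (simp add: powr_realpow[symmetric] powr_powr powr_add[symmetric] algebra_simps)
  then have "ennreal (2 powr (real_of_int (k1 - int j) * \<delta>)) * herz_term \<alpha> p F (k1 - int j)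
             \<le> ennreal (a * (2 powr (- \<delta>)) ^ j)" for j
    using mult_left_mono[OF herz_term_le_herz_norm[OF q, of \<alpha> p F "k1 - int j"],
        of "ennreal (2 powr (real_of_int (k1 - int j) * \<delta>))"] h
    by (simp add: a_def ennreal_mult[symmetric] mult_ac)
  then have "(\<Sum>j. ennreal (2 powr (real_of_int (k1 - int j) * \<delta>)) * herz_term \<alpha> p F (k1 - int j))
             \<le> (\<Sum>j. ennreal (a * (2 powr (- \<delta>)) ^ j))"
    by (intro suminf_le) auto
  also have "\<dots> < top"
  proof -
    have "summable (\<lambda>j. a * (2 powr (- \<delta>)) ^ j)"
      using True by (intro summable_mult summable_geometric) (simp add: powr_less_one)
    then have "(\<Sum>j. ennreal (a * (2 powr (- \<delta>)) ^ j)) \<noteq> top"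
      using h by (intro ennreal_suminf_neq_top) (auto simp: a_def)
    then show ?thesis by (simp add: top.not_eq_extremum)
  qed
  finally show ?thesis .
next
  case False
  then have "\<delta> = 0" "q = 1" using \<delta> by auto
  then have "(\<Sum>j. ennreal (2 powr (real_of_int (k1 - int j) * \<delta>)) * herz_term \<alpha> p F (k1 - int j))
             \<le> herz_norm \<alpha> p q F"
    by (simp add: herz_norm_1 suminf_le_nn_integral_count_space_int)
  then show ?thesis using H by (rule le_less_trans)
qed

lemma nn_integral_bounded_less_top_if_herz_norm_less_top:
  fixes F :: "'a::euclidean_space \<Rightarrow> real"
  assumes [measurable]: "F \<in> borel_measurable lebesgue" and H: "herz_norm \<alpha> p q F < top"
    and p: "1 \<le> p" and q: "1 \<le> q"
    and \<alpha>: "\<alpha> < critical_alpha DIM('a) p \<or> (\<alpha> = critical_alpha DIM('a) p \<and> q = 1)"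
    and K: "bounded K"
  shows "(\<integral>\<^sup>+x. ennreal (\<bar>F x\<bar> * indicator K x) \<partial>lebesgue) < top"
proof -
  define \<delta> where "\<delta> = critical_alpha DIM('a) p - \<alpha>"
  define c where "c = unit_annulus_volume TYPE('a) powr (1 - inv_exp p)"
  obtain R where R: "\<And>x. x \<in> K \<Longrightarrow> norm x \<le> R"
    using K by (auto simp: bounded_iff)
  obtain N :: nat where N: "R < 2 ^ N" using real_arch_pow[of 2 R] by auto
  have K_ball: "norm x < 2 powr real_of_int (int N)" if "x \<in> K" for x
    using R[OF that] N by (simp add: powr_realpow)
  have "(\<integral>\<^sup>+x. ennreal (\<bar>F x\<bar> * indicator K x) \<partial>lebesgue)
        \<le> (\<Sum>j. \<integral>\<^sup>+x. ennreal \<bar>F x * indicator (annulus (int N - int j)) x\<bar> \<partial>lebesgue)"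
    using K_ball by (intro nn_integral_le_suminf_annuli) auto
  also have "\<dots> \<le> (\<Sum>j. ennreal c * (ennreal (2 powr (real_of_int (int N - int j) * \<delta>)) *
                                        herz_term \<alpha> p F (int N - int j)))"
  proof (intro suminf_le)
    fix j
    show "(\<integral>\<^sup>+x. ennreal \<bar>F x * indicator (annulus (int N - int j)) x\<bar> \<partial>lebesgue) \<le>
          ennreal c * (ennreal (2 powr (real_of_int (int N - int j) * \<delta>)) * herz_term \<alpha> p F (int N - int j))"
      using nn_integral_annulus_le_herz_term[OF _ p, of F "int N - int j" \<alpha>]
      by (simp add: c_def \<delta>_def ennreal_mult mult.assoc)
  qed auto
  also have "\<dots> = ennreal c * (\<Sum>j. ennreal (2 powr (real_of_int (int N - int j) * \<delta>)) *
                                   herz_term \<alpha> p F (int N - int j))"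
    by (rule ennreal_suminf_cmult)
  also have "\<dots> < top"
  proof -
    have "\<delta> > 0 \<or> (\<delta> = 0 \<and> q = 1)" using \<alpha> by (auto simp: \<delta>_def)
    then show ?thesis
      using suminf_scaled_herz_terms_less_top[OF H q, of \<delta> "int N"]
      by (simp add: ennreal_mult_less_top)
  qed
  finally show ?thesis .
qed

lemma herz_space_subset_L1_loc:
  fixes \<Omega> :: "'a::euclidean_space set"
  assumes p: "1 \<le> p" and q: "1 \<le> q"
    and \<alpha>: "\<alpha> < critical_alpha DIM('a) p \<or> (\<alpha> = critical_alpha DIM('a) p \<and> q = 1)"
  shows "herz_space \<Omega> \<alpha> p q \<subseteq> L1_loc \<Omega>"
proof (intro subsetI, unfold L1_loc_def, intro CollectI allI impI, elim conjE)
  fix f K assume f: "f \<in> herz_space \<Omega> \<alpha> p q" and K: "compact K" "K \<subseteq> \<Omega>"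
  define F where "F x = indicator \<Omega> x * f x" for x
  have [measurable]: "F \<in> borel_measurable lebesgue" and H: "herz_norm \<alpha> p q F < top"
    using f by (auto simp: herz_space_def Lp_loc_punct_def F_def[abs_def])
  have [measurable]: "K \<in> sets lebesgue" using K(1) by (simp add: compact_imp_closed)
  have restrict: "indicator K x *\<^sub>R f x = indicator K x * F x" for x
    using K(2) by (auto simp: F_def indicator_def)
  have "(\<integral>\<^sup>+x. ennreal (\<bar>F x\<bar> * indicator K x) \<partial>lebesgue) < top"
    using compact_imp_bounded[OF K(1)]
    by (intro nn_integral_bounded_less_top_if_herz_norm_less_top[OF _ H p q \<alpha>]) auto
  then show "set_integrable lebesgue K f"
    unfolding set_integrable_def integrable_iff_bounded restrict by (simp add: abs_mult mult.commute)
qed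

section \<open>Necessity\<close>

definition annulus_profile :: "nat \<Rightarrow> int \<Rightarrow> int \<Rightarrow> real" where
  "annulus_profile n k0 k =
     (if k \<le> k0 then 2 powr (- (real_of_int k * real n)) / real_of_int (- k) else 0)"

definition herz_witness :: "int \<Rightarrow> 'a::euclidean_space \<Rightarrow> real" where
  "herz_witness k0 x = (if x = 0 then 0 else annulus_profile DIM('a) k0 (annulus_index x))"

lemma annulus_profile_nonneg: "k0 \<le> -1 \<Longrightarrow> annulus_profile n k0 k \<ge> 0"
  by (auto simp: annulus_profile_def intro: divide_nonneg_neg)

lemma herz_witness_mult_indicator_annulus:
  "herz_witness k0 x * indicator (annulus k) x =
     annulus_profile DIM('a) k0 k * indicator (annulus k) (x :: 'a::euclidean_space)"
  by (auto simp: herz_witness_def indicator_def mem_annulus_iff)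

lemma measurable_herz_witness [measurable]:
  "herz_witness k0 \<in> borel_measurable (lebesgue :: 'a::euclidean_space measure)"
proof -
  have [measurable]: "(\<lambda>x::'a. annulus_profile DIM('a) k0 (annulus_index x)) \<in> borel_measurable lebesgue"
    by (rule measurable_compose[OF measurable_annulus_index, where g = "annulus_profile DIM('a) k0"]) simp
  have [measurable]: "- {0::'a} \<in> sets lebesgue" by simp
  have "herz_witness k0 = (\<lambda>x::'a. indicator (- {0}) x * annulus_profile DIM('a) k0 (annulus_index x))"
    by (auto simp: herz_witness_def fun_eq_iff)
  then show ?thesis by simp
qed

lemma norm_less_if_herz_witness_nonzero:
  assumes "herz_witness k0 x \<noteq> 0"
  shows "norm (x :: 'a::euclidean_space) < 2 powr real_of_int k0"
  using assms by (auto simp: herz_witness_def annulus_profile_def annulus_index_le_iff split: if_splits)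

lemma abs_herz_witness_le:
  assumes "k0 \<le> -1" and x: "(x :: 'a::euclidean_space) \<noteq> 0"
  shows "\<bar>herz_witness k0 x\<bar> \<le> norm x powr (- real DIM('a))"
proof (cases "annulus_index x \<le> k0")
  case True
  define k where "k = annulus_index x"
  have "\<bar>herz_witness k0 x\<bar> = 2 powr (- (real_of_int k * real DIM('a))) / real_of_int (- k)"
    using True x assms by (simp add: herz_witness_def annulus_profile_def k_def)
  also have "\<dots> \<le> 2 powr (- (real_of_int k * real DIM('a)))"
    using True assms divide_left_mono[of 1 "real_of_int (- k)" "2 powr (- (real_of_int k * real DIM('a)))"]
    by (simp add: k_def)
  also have "\<dots> = (2 powr real_of_int k) powr (- real DIM('a))"
    by (simp add: powr_powr)
  also have "\<dots> \<le> norm x powr (- real DIM('a))"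
    using x annulus_index_le_iff[OF x, of k] by (intro powr_mono2') (auto simp: k_def)
  finally show ?thesis .
qed (use x in \<open>simp add: herz_witness_def annulus_profile_def\<close>)

lemma herz_term_herz_witness:
  assumes "k0 \<le> -1" and p: "1 \<le> p"
  shows "herz_term \<alpha> p (herz_witness k0 :: 'a::euclidean_space \<Rightarrow> real) k =
    ennreal (unit_annulus_volume TYPE('a) powr inv_exp p *
      (if k \<le> k0 then 2 powr (real_of_int k * (\<alpha> - critical_alpha DIM('a) p)) / real_of_int (- k) else 0))"
proof -
  define n where "n = DIM('a)"
  define c where "c = unit_annulus_volume TYPE('a)"
  have c: "c > 0" using unit_annulus_volume_pos by (simp add: c_def)
  have "Lp_norm p (\<lambda>x::'a. herz_witness k0 x * indicator (annulus k) x) =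
        ennreal (annulus_profile n k0 k * (2 powr (real_of_int k * n) * c) powr inv_exp p)"
    using Lp_norm_cmult_indicator[OF sets_annulus emeasure_annulus[where 'a='a] _ p,
        where c = "annulus_profile n k0 k"]
      annulus_profile_nonneg[OF assms(1)] c
    by (simp add: herz_witness_mult_indicator_annulus n_def c_def)
  moreover have "2 powr (real_of_int k * \<alpha>) * 2 powr (- (real_of_int k * n)) * 2 powr (real_of_int k * n * inv_exp p)
     = 2 powr (real_of_int k * (\<alpha> - critical_alpha n p))"
    by (simp add: critical_alpha_def powr_add[symmetric] algebra_simps)
  ultimately show ?thesis
    using c by (auto simp: herz_term_def annulus_profile_def n_def c_def powr_mult powr_powr
        ennreal_mult'[symmetric] algebra_simps)
qed

lemma summable_witness_weights:
  fixes \<delta> r :: real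
  assumes k0: "k0 \<le> -1" and r: "r \<ge> 1" and \<delta>: "\<delta> > 0 \<or> (\<delta> = 0 \<and> r > 1)"
  shows "summable (\<lambda>j. (2 powr ((real_of_int k0 - real j) * \<delta>) / (real j - real_of_int k0)) powr r)"
proof (cases "\<delta> > 0")
  case True
  show ?thesis
  proof (rule summable_comparison_test'[where N = 0])
    show "summable (\<lambda>j. (2 powr (- \<delta>)) ^ j)"
      using True by (intro summable_geometric) (simp add: powr_less_one)
  next
    fix j :: nat
    define w where "w = 2 powr ((real_of_int k0 - real j) * \<delta>) / (real j - real_of_int k0)"
    have "w \<le> 2 powr ((real_of_int k0 - real j) * \<delta>)"
      using k0 divide_left_mono[of 1 "real j - real_of_int k0" "2 powr ((real_of_int k0 - real j) * \<delta>)"]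
      by (simp add: w_def)
    also have "\<dots> \<le> 2 powr (- \<delta> * real j)"
      using True k0 by (intro powr_mono) (auto simp: algebra_simps mult_nonneg_nonpos)
    also have "\<dots> = (2 powr (- \<delta>)) ^ j"
      by (simp add: powr_realpow[symmetric] powr_powr)
    finally have w: "w \<le> (2 powr (- \<delta>)) ^ j" .
    moreover have "(2 powr (- \<delta>)) ^ j \<le> 1"
      using True by (intro power_le_one) (auto simp: less_imp_le[OF powr_less_one])
    moreover have "w \<ge> 0" using k0 by (simp add: w_def)
    ultimately have "w powr r \<le> w powr 1" using r by (intro powr_mono') auto
    then show "norm (w powr r) \<le> (2 powr (- \<delta>)) ^ j"
      using w \<open>w \<ge> 0\<close> by simp
  qed
next
  case False
  then have \<delta>0: "\<delta> = 0" and r1: "r > 1" using \<delta> by auto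
  show ?thesis
  proof (rule summable_comparison_test'[where N = 0])
    show "summable (\<lambda>j. real (Suc j) powr (- r))"
      using r1 summable_Suc_iff[of "\<lambda>j. real j powr (- r)"] by (simp add: summable_real_powr_iff)
  next
    fix j :: nat
    have "(2 powr ((real_of_int k0 - real j) * \<delta>) / (real j - real_of_int k0)) powr r =
          (real j - real_of_int k0) powr (- r)"
      using k0 by (simp add: \<delta>0 powr_divide powr_minus_divide)
    also have "\<dots> \<le> real (Suc j) powr (- r)"
      using k0 r by (intro powr_mono2') auto
    finally show "norm ((2 powr ((real_of_int k0 - real j) * \<delta>) / (real j - real_of_int k0)) powr r)
                  \<le> real (Suc j) powr (- r)"
      by simp
  qed
qed

lemma herz_norm_herz_witness_less_top:
  assumes k0: "k0 \<le> -1" and p: "1 \<le> p" and q: "1 \<le> q"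
    and \<alpha>: "\<alpha> > critical_alpha DIM('a) p \<or> (\<alpha> = critical_alpha DIM('a) p \<and> q \<noteq> 1)"
  shows "herz_norm \<alpha> p q (herz_witness k0 :: 'a::euclidean_space \<Rightarrow> real) < top"
proof -
  define c where "c = unit_annulus_volume TYPE('a) powr inv_exp p"
  define \<delta> where "\<delta> = \<alpha> - critical_alpha DIM('a) p"
  define w where "w k = (if k \<le> k0 then 2 powr (real_of_int k * \<delta>) / real_of_int (- k) else 0)" for k
  have c: "c > 0" using unit_annulus_volume_pos[where 'a = 'a] by (simp add: c_def)
  have w: "w k \<ge> 0" for k using k0 by (auto simp: w_def intro: divide_nonneg_neg)
  have terms: "herz_term \<alpha> p (herz_witness k0 :: 'a \<Rightarrow> real) k = ennreal (c * w k)" for k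
    by (simp add: herz_term_herz_witness[OF k0 p] c_def w_def \<delta>_def)
  show ?thesis
  proof (cases "q = top")
    case True
    have "w k \<le> 1" for k
    proof (cases "k \<le> k0")
      case True
      have "real_of_int k * \<delta> \<le> 0"
        using True k0 \<alpha> by (auto simp: \<delta>_def intro: mult_nonpos_nonneg)
      then have "2 powr (real_of_int k * \<delta>) \<le> 1"
        using powr_mono[of _ 0 "2::real"] by simp
      moreover have "2 powr (real_of_int k * \<delta>) / real_of_int (- k) \<le> 2 powr (real_of_int k * \<delta>)"
        using True k0 divide_left_mono[of 1 "real_of_int (- k)" "2 powr (real_of_int k * \<delta>)"] by simp
      ultimately show ?thesis using True by (simp add: w_def)
    qed (simp add: w_def)
    then have "herz_term \<alpha> p (herz_witness k0 :: 'a \<Rightarrow> real) k \<le> ennreal c" for k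
      using c w[of k] by (simp add: terms ennreal_leI mult_left_le)
    then show ?thesis unfolding True by (rule herz_norm_top_less_top)
  next
    case False
    define r where "r = enn2real q"
    have r: "r \<ge> 1" using finite_exponent[OF q False] by (simp add: r_def)
    have "q \<noteq> 1 \<Longrightarrow> r \<noteq> 1" using False ennreal_enn2real[of q] by (auto simp: r_def top.not_eq_extremum)
    then have "\<delta> > 0 \<or> (\<delta> = 0 \<and> r > 1)" using \<alpha> r by (auto simp: \<delta>_def)
    then have "summable (\<lambda>j. c powr r * w (k0 - int j) powr r)"
      using summable_witness_weights[OF k0 r] by (intro summable_mult) (simp add: w_def)
    then have "summable (\<lambda>j. (c * w (k0 - int j)) powr r)"
      using c w by (simp add: powr_mult)
    then show ?thesis
      using c w by (intro herz_norm_less_top_if_summable[OF q False terms, where N = k0]) (auto simp: w_def r_def)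
  qed
qed

lemma Lp_norm_herz_witness_compact_less_top:
  fixes K :: "'a::euclidean_space set"
  assumes k0: "k0 \<le> -1" and K: "compact K" "0 \<notin> K" and p: "1 \<le> p"
  shows "Lp_norm p (\<lambda>x. herz_witness k0 x * indicator K x) < top"
proof -
  obtain d where d: "d > 0" "\<And>x. x \<in> K \<Longrightarrow> d \<le> dist 0 x"
    using separate_point_closed[OF compact_imp_closed[OF K(1)], of 0] K(2) by auto
  have bound: "\<bar>herz_witness k0 x\<bar> \<le> d powr (- real DIM('a))" if "x \<in> K" for x
  proof -
    have "\<bar>herz_witness k0 x\<bar> \<le> norm x powr (- real DIM('a))"
      using that K(2) by (intro abs_herz_witness_le[OF k0]) auto
    also have "\<dots> \<le> d powr (- real DIM('a))"
      using d that by (intro powr_mono2') auto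
    finally show ?thesis .
  qed
  have [measurable]: "K \<in> sets lebesgue" using K(1) by (simp add: compact_imp_closed)
  show ?thesis
  proof (rule Lp_norm_less_top_if_bounded[where M = "d powr (- real DIM('a))", OF _ _ _ _ _ p])
    show "emeasure lebesgue K < top"
      using emeasure_compact_finite[of K] K(1) by (simp add: compact_imp_closed)
    show "\<bar>herz_witness k0 x * indicator K x\<bar> \<le> d powr (- real DIM('a)) * indicator K x" for x
      using bound by (cases "x \<in> K") auto
  qed auto
qed

lemma herz_witness_in_herz_space:
  fixes \<Omega> :: "'a::euclidean_space set"
  assumes k0: "k0 \<le> -1" and \<Omega>: "ball 0 (2 powr real_of_int k0) \<subseteq> \<Omega>"
    and p: "1 \<le> p" and q: "1 \<le> q"
    and \<alpha>: "\<alpha> > critical_alpha DIM('a) p \<or> (\<alpha> = critical_alpha DIM('a) p \<and> q \<noteq> 1)"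
  shows "herz_witness k0 \<in> herz_space \<Omega> \<alpha> p q"
proof -
  have restrict: "indicator \<Omega> x * herz_witness k0 x = herz_witness k0 x" for x
    using \<Omega> norm_less_if_herz_witness_nonzero[of k0 x] by (force simp: indicator_def)
  show ?thesis
    using herz_norm_herz_witness_less_top[OF k0 p q \<alpha>] Lp_norm_herz_witness_compact_less_top[OF k0 _ _ p]
    by (auto simp: herz_space_def Lp_loc_punct_def restrict)
qed

lemma nn_integral_herz_witness_annulus:
  assumes k0: "k0 \<le> -1" and k: "k \<le> k0"
  shows "(\<integral>\<^sup>+x. ennreal (\<bar>herz_witness k0 x\<bar> * indicator (annulus k) x) \<partial>(lebesgue :: 'a measure)) =
           ennreal (unit_annulus_volume TYPE('a::euclidean_space) / real_of_int (- k))"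
proof -
  define c where "c = unit_annulus_volume TYPE('a)"
  have c: "c > 0" using unit_annulus_volume_pos[where 'a = 'a] by (simp add: c_def)
  have "(\<integral>\<^sup>+x. ennreal (\<bar>herz_witness k0 x\<bar> * indicator (annulus k) x) \<partial>(lebesgue :: 'a measure))
      = (\<integral>\<^sup>+x. ennreal (annulus_profile DIM('a) k0 k) * indicator (annulus k :: 'a set) x \<partial>lebesgue)"
    using herz_witness_mult_indicator_annulus[where 'a = 'a, of k0 _ k] annulus_profile_nonneg[OF k0]
    by (intro nn_integral_cong) (auto simp: indicator_def abs_mult split: if_splits)
  also have "\<dots> = ennreal (annulus_profile DIM('a) k0 k * (2 powr (real_of_int k * DIM('a)) * c))"
    using annulus_profile_nonneg[OF k0] c
    by (simp add: nn_integral_cmult_indicator emeasure_annulus c_def ennreal_mult)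
  also have "annulus_profile DIM('a) k0 k * (2 powr (real_of_int k * DIM('a)) * c) = c / real_of_int (- k)"
  proof -
    have "2 powr (- (real_of_int k * DIM('a))) * 2 powr (real_of_int k * DIM('a)) = 1"
      by (simp add: powr_add[symmetric])
    then show ?thesis using k by (simp add: annulus_profile_def field_simps)
  qed
  finally show ?thesis by (simp add: c_def)
qed

lemma ennreal_abs_herz_witness_eq_suminf:
  "ennreal \<bar>herz_witness k0 x\<bar> =
     (\<Sum>j. ennreal (\<bar>herz_witness k0 x\<bar> * indicator (annulus (k0 - int j)) x))"
proof (cases "x \<noteq> 0 \<and> annulus_index x \<le> k0")
  case False
  then have "herz_witness k0 x = 0" by (auto simp: herz_witness_def annulus_profile_def)
  then show ?thesis by simp
qed (simp add: suminf_annuli_below)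

lemma nn_integral_herz_witness_eq_top:
  assumes k0: "k0 \<le> -1"
  shows "(\<integral>\<^sup>+x. ennreal \<bar>herz_witness k0 x\<bar> \<partial>(lebesgue :: 'a::euclidean_space measure)) = top"
proof -
  define c where "c = unit_annulus_volume TYPE('a)"
  have c: "c > 0" using unit_annulus_volume_pos[where 'a = 'a] by (simp add: c_def)
  have annuli: "(\<integral>\<^sup>+x. ennreal (\<bar>herz_witness k0 x\<bar> * indicator (annulus (k0 - int j)) x)
                 \<partial>(lebesgue :: 'a measure)) = ennreal (c / real (j + nat (- k0)))" for j
  proof -
    have shift: "real_of_int (- (k0 - int j)) = real (j + nat (- k0))" using k0 by simp
    show ?thesis
      unfolding c_def by (rule nn_integral_herz_witness_annulus[OF k0, of "k0 - int j", unfolded shift]) simp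
  qed
  have "(\<integral>\<^sup>+x. ennreal \<bar>herz_witness k0 x\<bar> \<partial>(lebesgue :: 'a measure)) =
        (\<integral>\<^sup>+x. (\<Sum>j. ennreal (\<bar>herz_witness k0 x\<bar> * indicator (annulus (k0 - int j)) x))
           \<partial>(lebesgue :: 'a measure))"
    by (rule nn_integral_cong) (rule ennreal_abs_herz_witness_eq_suminf)
  also have "\<dots> = (\<Sum>j. ennreal (c / real (j + nat (- k0))))"
    by (simp add: nn_integral_suminf annuli)
  also have "\<dots> = top"
  proof (rule summable_iff_suminf_neq_top)
    show "\<not> summable (\<lambda>j. c / real (j + nat (- k0)))"
      using c not_summable_harmonic[where 'a = real]
        summable_iff_shift[of "\<lambda>j. inverse (real j)" "nat (- k0)"]
      by (simp add: summable_cmult_iff divide_inverse)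
  qed (use c in simp)
  finally show ?thesis .
qed

lemma herz_space_not_subset_L1_loc:
  fixes \<Omega> :: "'a::euclidean_space set"
  assumes \<Omega>: "open \<Omega>" "0 \<in> \<Omega>" and p: "1 \<le> p" and q: "1 \<le> q"
    and \<alpha>: "\<alpha> > critical_alpha DIM('a) p \<or> (\<alpha> = critical_alpha DIM('a) p \<and> q \<noteq> 1)"
  shows "\<not> herz_space \<Omega> \<alpha> p q \<subseteq> L1_loc \<Omega>"
proof
  assume sub: "herz_space \<Omega> \<alpha> p q \<subseteq> L1_loc \<Omega>"
  obtain r where r: "r > 0" "cball 0 r \<subseteq> \<Omega>" using \<Omega> open_contains_cball by blast
  define k0 where "k0 = min (-1) \<lfloor>log 2 r\<rfloor>"
  have k0: "k0 \<le> -1" by (simp add: k0_def)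
  have "k0 \<le> \<lfloor>log 2 r\<rfloor>" by (simp add: k0_def)
  then have "2 powr real_of_int k0 \<le> 2 powr log 2 r"
    by (intro powr_mono) (auto simp: le_floor_iff)
  then have k0_r: "2 powr real_of_int k0 \<le> r" using r(1) by simp
  have "herz_witness k0 \<in> herz_space \<Omega> \<alpha> p q"
    using k0_r r(2) by (intro herz_witness_in_herz_space[OF k0 _ p q \<alpha>]) auto
  then have "set_integrable lebesgue (cball 0 r) (herz_witness k0 :: 'a \<Rightarrow> real)"
    using sub r(2) by (auto simp: L1_loc_def)
  moreover have "indicator (cball 0 r) x * herz_witness k0 x = herz_witness k0 (x :: 'a)" for x
    using norm_less_if_herz_witness_nonzero[of k0 x] k0_r by (force simp: indicator_def)
  ultimately have "(\<integral>\<^sup>+x. ennreal \<bar>herz_witness k0 x\<bar> \<partial>(lebesgue :: 'a measure)) < top"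
    by (simp add: set_integrable_def integrable_iff_bounded)
  then show False using nn_integral_herz_witness_eq_top[OF k0, where 'a = 'a] by simp
qed

theorem lemma2p4:
  fixes \<Omega> :: "'a::euclidean_space set" and \<alpha> :: real and p q :: ennreal
  assumes "open \<Omega>" and "0 \<in> \<Omega>" and "1 \<le> p" and "1 \<le> q"
  shows "herz_space \<Omega> \<alpha> p q \<subseteq> L1_loc \<Omega> \<longleftrightarrow> (\<alpha>, p, q) \<in> V_set DIM('a)"
proof -
  have V: "(\<alpha>, p, q) \<in> V_set DIM('a) \<longleftrightarrow>
           \<alpha> < critical_alpha DIM('a) p \<or> (\<alpha> = critical_alpha DIM('a) p \<and> q = 1)"
    using assms(3,4) by (intro V_set_iff_critical_alpha) auto
  show ?thesis
  proof
    assume sub: "herz_space \<Omega> \<alpha> p q \<subseteq> L1_loc \<Omega>"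
    show "(\<alpha>, p, q) \<in> V_set DIM('a)"
    proof (rule ccontr)
      assume "(\<alpha>, p, q) \<notin> V_set DIM('a)"
      then have "\<alpha> > critical_alpha DIM('a) p \<or> (\<alpha> = critical_alpha DIM('a) p \<and> q \<noteq> 1)"
        using V by auto
      then show False using herz_space_not_subset_L1_loc[OF assms] sub by blast
    qed
  next
    assume "(\<alpha>, p, q) \<in> V_set DIM('a)"
    then show "herz_space \<Omega> \<alpha> p q \<subseteq> L1_loc \<Omega>"
      using herz_space_subset_L1_loc[OF assms(3,4)] V by blast
  qed
qed

end
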